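(* If $X$ is a Lindelöf $\Sigma$-space with $nw(X)\leq\mathfrak c$, then $|C(X)|\leq\mathfrak c$ and $w(X)\leq\mathfrak c$.
   Context: All spaces are Tychonoff. $C(X)$ is the set of continuous real-valued functions on $X$; $nw$ is network weight, $w$ weight, $\mathfrak c=2^\omega$. The Nagami number $Nag(X)$ is the minimal cardinality of a family $\mathcal F$ of closed subsets of $\beta X$ such that for every $x\in X$ and $y\in\beta X\setminus X$ there is $F\in\mathcal F$ with $x\in F$, $y\notin F$. $X$ is a Lindelöf $\Sigma$-space if $Nag(X)\leq\omega$. *)

theory Defs
  imports "HOL-Analysis.Analysis" "HOL-Library.Equipollence"
begin

definition tychonoff_space :: "'a topology \<Rightarrow> bool" where
  "tychonoff_space X \<longleftrightarrow> completely_regular_space X \<and> Hausdorff_space X"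

definition network :: "'a topology \<Rightarrow> 'a set set \<Rightarrow> bool" where
  "network X \<N> \<longleftrightarrow> (\<forall>N\<in>\<N>. N \<subseteq> topspace X) \<and>
     (\<forall>U x. openin X U \<and> x \<in> U \<longrightarrow> (\<exists>N\<in>\<N>. x \<in> N \<and> N \<subseteq> U))"

definition nw_le_continuum :: "'a topology \<Rightarrow> bool" where
  "nw_le_continuum X \<longleftrightarrow> (\<exists>\<N>. network X \<N> \<and> \<N> \<lesssim> (UNIV :: real set))"

definition topology_base :: "'a topology \<Rightarrow> 'a set set \<Rightarrow> bool" where
  "topology_base X \<B> \<longleftrightarrow> (\<forall>B\<in>\<B>. openin X B) \<and> openin X = arbitrary union_of (\<lambda>U. U \<in> \<B>)"

definition weight_le_continuum :: "'a topology \<Rightarrow> bool" where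
  "weight_le_continuum X \<longleftrightarrow> (\<exists>\<B>. topology_base X \<B> \<and> \<B> \<lesssim> (UNIV :: real set))"

definition Cfun :: "'a topology \<Rightarrow> ('a \<Rightarrow> real) set" where
  "Cfun X = (\<lambda>f. restrict f (topspace X)) ` {f. continuous_map X euclideanreal f}"

definition stone_cech :: "'a topology \<Rightarrow> 'b topology \<Rightarrow> ('a \<Rightarrow> 'b) \<Rightarrow> bool" where
  "stone_cech X K e \<longleftrightarrow> compact_space K \<and> Hausdorff_space K \<and> embedding_map X K e \<and>
     K closure_of (e ` topspace X) = topspace K \<and>
     (\<forall>f. continuous_map X (top_of_set {0..1::real}) f \<longrightarrow>
        (\<exists>g. continuous_map K (top_of_set {0..1::real}) g \<and> (\<forall>x\<in>topspace X. g (e x) = f x)))"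

text \<open>Nag(X) \<le> \<omega>: a countable family of closed subsets of \<beta>X separating points of X from
  points of \<beta>X \ X. \<beta>X is realised (as in its standard construction) inside the cube
  [0,1]^{C*(X)}, hence on the type ('a \<Rightarrow> real) \<Rightarrow> real; it is unique up to a
  homeomorphism fixing X, so the existential choice of (K,e) is harmless.\<close>
definition lindelof_sigma :: "'a topology \<Rightarrow> bool" where
  "lindelof_sigma X \<longleftrightarrow>
     (\<exists>(K :: (('a \<Rightarrow> real) \<Rightarrow> real) topology) e. stone_cech X K e \<and>
       (\<exists>\<F>. countable \<F> \<and> (\<forall>F\<in>\<F>. closedin K F) \<and>
          (\<forall>x\<in>topspace X. \<forall>y\<in>topspace K - e ` topspace X.
             \<exists>F\<in>\<F>. e x \<in> F \<and> y \<notin> F)))"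

end

theory Submission
  imports Defs
begin

text \<open>Realise \<beta>X as K with embedding e and let \<F> be a countable closed family witnessing
  Nag(X) \<le> \<omega>. For x \<in> X the intersection P of the members of \<F> containing e x is a compact
  subset of e(X). Every pair of network elements separated by some f \<in> C(X, [0,1]) yields an
  extension h of f to K; these at most c functions separate the points of X, so finitely many of
  them cut out cells of K on which a continuous g oscillates by less than \<epsilon> over P. By
  compactness a finite subfamily T of \<F> already confines g on \<Inter>T to within \<epsilon> of finitely
  many values attached to finitely many cells. Such data, chosen for each of the countably many
  pairs (\<epsilon>, T), determine g on e(X); there are at most c^\<omega> = c choices, so |C(X)| \<le> c.
  Finally the sets {r < 1/2}, r \<in> C(X), form a base of the completely regular space X.\<close>

lemma countable_power_nat_sets_lepoll:
  "(UNIV :: ('i::countable \<Rightarrow> nat set) set) \<lesssim> (UNIV :: nat set set)"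
proof -
  define enc :: "('i \<Rightarrow> nat set) \<Rightarrow> nat set"
    where "enc F = {prod_encode (to_nat k, j) | k j. j \<in> F k}" for F
  have mem: "prod_encode (to_nat k, j) \<in> enc F \<longleftrightarrow> j \<in> F k" for F k j
    by (auto simp: enc_def dest: inj_onD[OF inj_prod_encode])
  have "inj enc"
    by (rule injI, rule ext, rule set_eqI) (metis mem)
  then show ?thesis
    unfolding lepoll_def by blast
qed

lemma countable_power_lepoll_nat_sets:
  assumes "A \<lesssim> (UNIV :: nat set set)"
  shows "{c :: 'i::countable \<Rightarrow> 'b. \<forall>k. c k \<in> A} \<lesssim> (UNIV :: nat set set)"
proof -
  obtain g :: "'b \<Rightarrow> nat set" where g: "inj_on g A"
    using assms unfolding lepoll_def by blast
  have "inj_on (\<lambda>c. g \<circ> c) {c :: 'i \<Rightarrow> 'b. \<forall>k. c k \<in> A}"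
    by (rule inj_onI, rule ext) (metis comp_apply g inj_onD mem_Collect_eq)
  then have "{c :: 'i \<Rightarrow> 'b. \<forall>k. c k \<in> A} \<lesssim> (UNIV :: ('i \<Rightarrow> nat set) set)"
    unfolding lepoll_def by blast
  then show ?thesis
    using countable_power_nat_sets_lepoll lepoll_trans by blast
qed

lemma Times_lepoll_nat_sets:
  assumes "A \<lesssim> (UNIV :: nat set set)" and "B \<lesssim> (UNIV :: nat set set)"
  shows "A \<times> B \<lesssim> (UNIV :: nat set set)"
proof -
  have "inj (\<lambda>(S, T :: nat set). \<lambda>b :: bool. if b then S else T)"
    by (rule injI) (metis (mono_tags, lifting) case_prod_beta prod_eq_iff)
  then have "(UNIV :: (nat set \<times> nat set) set) \<lesssim> (UNIV :: (bool \<Rightarrow> nat set) set)"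
    unfolding lepoll_def by blast
  then show ?thesis
    using times_lepoll_mono[OF assms] countable_power_nat_sets_lepoll lepoll_trans
    by (metis UNIV_Times_UNIV)
qed

lemma lists_lepoll_nat_sets:
  assumes "A \<lesssim> (UNIV :: nat set set)"
  shows "lists A \<lesssim> (UNIV :: nat set set)"
proof -
  obtain g :: "'a \<Rightarrow> nat set" where g: "inj_on g A"
    using assms unfolding lepoll_def by blast
  define enc where "enc xs = ({length xs}, \<lambda>i. if i < length xs then g (xs ! i) else {})" for xs
  have "inj_on enc (lists A)"
  proof (rule inj_onI)
    fix xs ys assume xs: "xs \<in> lists A" and ys: "ys \<in> lists A" and "enc xs = enc ys"
    then have len: "length xs = length ys"
      and nth: "\<And>i. i < length xs \<Longrightarrow> g (xs ! i) = g (ys ! i)"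
      unfolding enc_def by (auto dest!: fun_cong[where x = i for i] split: if_splits)
    show "xs = ys"
      using len nth xs ys by (auto intro!: nth_equalityI inj_onD[OF g] simp: in_lists_conv_set)
  qed
  then have "lists A \<lesssim> (UNIV :: (nat set \<times> (nat \<Rightarrow> nat set)) set)"
    unfolding lepoll_def by blast
  also have "\<dots> \<lesssim> (UNIV :: nat set set)"
    using Times_lepoll_nat_sets[OF lepoll_refl countable_power_nat_sets_lepoll]
    by (simp add: UNIV_Times_UNIV[symmetric] del: UNIV_Times_UNIV)
  finally show ?thesis .
qed

lemma option_lepoll_nat_sets:
  assumes "A \<lesssim> (UNIV :: nat set set)"
  shows "insert None (Some ` A) \<lesssim> (UNIV :: nat set set)"
proof -
  obtain g :: "'a \<Rightarrow> nat set" where g: "inj_on g A"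
    using assms unfolding lepoll_def by blast
  have "inj_on (case_option ({}, {}) (\<lambda>a. ({0}, g a))) (insert None (Some ` A))"
    using g by (auto simp: inj_on_def)
  then have "insert None (Some ` A) \<lesssim> (UNIV :: (nat set \<times> nat set) set)"
    unfolding lepoll_def by blast
  also have "\<dots> \<lesssim> (UNIV :: nat set set)"
    using Times_lepoll_nat_sets[OF lepoll_refl lepoll_refl]
    by (simp add: UNIV_Times_UNIV[symmetric] del: UNIV_Times_UNIV)
  finally show ?thesis .
qed

lemma stone_cech_extension:
  assumes "stone_cech X K e" and "continuous_map X (top_of_set {0..1}) f"
  obtains g where "continuous_map K euclideanreal g" and "\<And>x. x \<in> topspace X \<Longrightarrow> g (e x) = f x"
  using assms unfolding stone_cech_def by (metis continuous_map_in_subtopology)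

lemma network_separation:
  assumes "completely_regular_space X" and "t1_space X" and "network X N"
    and x: "x \<in> topspace X" and y: "y \<in> topspace X" and "x \<noteq> y"
  obtains A B u where "A \<in> N" "B \<in> N" "x \<in> A" "y \<in> B"
    and "continuous_map X (top_of_set {0..1::real}) u" "\<forall>a\<in>A. u a < 1/2" "\<forall>b\<in>B. 1/2 < u b"
proof -
  have "closedin X {y}" and "x \<in> topspace X - {y}"
    using assms closedin_t1_singleton by auto
  then obtain u where u: "continuous_map X (top_of_set {0..1::real}) u" "u x = 0" "u ` {y} \<subseteq> {1}"
    using assms(1) unfolding completely_regular_space_def by blast
  then have ue: "continuous_map X euclideanreal u"
    using continuous_map_in_subtopology by blast
  have "openin X {z \<in> topspace X. u z \<in> {..<1/2}}" "openin X {z \<in> topspace X. u z \<in> {1/2<..}}"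
    by (rule openin_continuous_map_preimage[OF ue], simp)+
  moreover have "x \<in> {z \<in> topspace X. u z \<in> {..<1/2}}" "y \<in> {z \<in> topspace X. u z \<in> {1/2<..}}"
    using x y u by auto
  ultimately obtain A B where "A \<in> N" "x \<in> A" "A \<subseteq> {z \<in> topspace X. u z \<in> {..<1/2}}"
    and "B \<in> N" "y \<in> B" "B \<subseteq> {z \<in> topspace X. u z \<in> {1/2<..}}"
    using \<open>network X N\<close> unfolding network_def by meson
  with u(1) show ?thesis
    by (intro that) auto
qed

lemma stone_cech_separating_family:
  assumes "completely_regular_space X" and "t1_space X" and "stone_cech X K e" and "network X N"
  obtains D h where "D \<subseteq> N \<times> N" and "\<And>d. d \<in> D \<Longrightarrow> continuous_map K euclideanreal (h d)"
    and "\<And>x y. x \<in> topspace X \<Longrightarrow> y \<in> topspace X \<Longrightarrow> x \<noteq> y \<Longrightarrow>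
           \<exists>d\<in>D. h d (e x) < 1/2 \<and> 1/2 < h d (e y)"
proof -
  define D where "D = {(A, B) \<in> N \<times> N. \<exists>u. continuous_map X (top_of_set {0..1::real}) u \<and>
                         (\<forall>a\<in>A. u a < 1/2) \<and> (\<forall>b\<in>B. 1/2 < u b)}"
  have "\<exists>g. continuous_map K euclideanreal g \<and> (\<forall>a\<in>fst d. g (e a) < 1/2) \<and> (\<forall>b\<in>snd d. 1/2 < g (e b))"
    if "d \<in> D" for d
  proof -
    obtain A B u where d: "d = (A, B)" "A \<in> N" "B \<in> N"
      and u: "continuous_map X (top_of_set {0..1::real}) u" "\<forall>a\<in>A. u a < 1/2" "\<forall>b\<in>B. 1/2 < u b"
      using \<open>d \<in> D\<close> unfolding D_def by blast
    obtain g where g: "continuous_map K euclideanreal g" "\<And>x. x \<in> topspace X \<Longrightarrow> g (e x) = u x"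
      using stone_cech_extension[OF assms(3) u(1)] by blast
    have "A \<subseteq> topspace X" "B \<subseteq> topspace X"
      using d \<open>network X N\<close> unfolding network_def by auto
    with d u g show ?thesis
      by (intro exI[of _ g]) (auto simp: subset_iff)
  qed
  then obtain h where h: "\<And>d. d \<in> D \<Longrightarrow> continuous_map K euclideanreal (h d) \<and>
      (\<forall>a\<in>fst d. h d (e a) < 1/2) \<and> (\<forall>b\<in>snd d. 1/2 < h d (e b))"
    by metis
  show ?thesis
  proof
    show "D \<subseteq> N \<times> N"
      unfolding D_def by blast
    show "continuous_map K euclideanreal (h d)" if "d \<in> D" for d
      using h[OF that] by blast
    fix x y assume "x \<in> topspace X" "y \<in> topspace X" "x \<noteq> y"
    then obtain A B u where "A \<in> N" "B \<in> N" "x \<in> A" "y \<in> B"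
      and "continuous_map X (top_of_set {0..1::real}) u" "\<forall>a\<in>A. u a < 1/2" "\<forall>b\<in>B. 1/2 < u b"
      using network_separation assms by metis
    then have "(A, B) \<in> D"
      unfolding D_def by blast
    with h[OF this] \<open>x \<in> A\<close> \<open>y \<in> B\<close> show "\<exists>d\<in>D. h d (e x) < 1/2 \<and> 1/2 < h d (e y)"
      by fastforce
  qed
qed

lemma closedin_abs_diff_ge:
  assumes "continuous_map K euclideanreal g"
  shows "closedin K {w \<in> topspace K. \<epsilon> \<le> \<bar>g w - c\<bar>}"
proof -
  have "continuous_map K euclideanreal (\<lambda>w. \<bar>g w - c\<bar>)"
    using assms by (intro continuous_intros)
  from closedin_continuous_map_preimage[OF this, of "{\<epsilon>..}"] show ?thesis
    by simp
qed

(* K, e, \<F> play the roles of \<beta>X, the inclusion of X and a countable Nagami family; the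
   h d are the extensions of functions separating pairs d of network elements. *)
locale lindelof_sigma_setting =
  fixes X :: "'a topology" and K :: "'k topology" and e :: "'a \<Rightarrow> 'k"
    and \<F> :: "'k set set" and D :: "'d set" and h :: "'d \<Rightarrow> 'k \<Rightarrow> real"
  assumes compact_K: "compact_space K"
    and image_e: "e ` topspace X \<subseteq> topspace K"
    and countable_\<F>: "countable \<F>"
    and closedin_\<F>: "\<And>F. F \<in> \<F> \<Longrightarrow> closedin K F"
    and \<F>_separates: "\<And>x y. x \<in> topspace X \<Longrightarrow> y \<in> topspace K - e ` topspace X \<Longrightarrow>
                              \<exists>F\<in>\<F>. e x \<in> F \<and> y \<notin> F"
    and continuous_h: "\<And>d. d \<in> D \<Longrightarrow> continuous_map K euclideanreal (h d)"
    and h_separates: "\<And>x y. x \<in> topspace X \<Longrightarrow> y \<in> topspace X \<Longrightarrow> x \<noteq> y \<Longrightarrow>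
                              \<exists>d\<in>D. h d (e x) < 1/2 \<and> 1/2 < h d (e y)"
begin

definition open_cell :: "'d list \<Rightarrow> 'k set" where
  "open_cell s = {w \<in> topspace K. \<forall>d\<in>set s. h d w < 1/2}"

definition closed_cell :: "'d list \<Rightarrow> 'k set" where
  "closed_cell s = {w \<in> topspace K. \<forall>d\<in>set s. h d w \<le> 1/2}"

lemma open_cell_subset_closed_cell: "open_cell s \<subseteq> closed_cell s"
  by (auto simp: open_cell_def closed_cell_def)

lemma openin_open_cell: "s \<in> lists D \<Longrightarrow> openin K (open_cell s)"
proof (induction s)
  case Nil
  then show ?case by (simp add: open_cell_def)
next
  case (Cons d s)
  have "open_cell (d # s) = open_cell s \<inter> {w \<in> topspace K. h d w \<in> {..<1/2}}"
    by (auto simp: open_cell_def)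
  moreover have "openin K {w \<in> topspace K. h d w \<in> {..<1/2}}"
    using Cons.prems by (intro openin_continuous_map_preimage[OF continuous_h]) auto
  ultimately show ?case
    using Cons by auto
qed

lemma closedin_closed_cell: "s \<in> lists D \<Longrightarrow> closedin K (closed_cell s)"
proof (induction s)
  case Nil
  then show ?case by (simp add: closed_cell_def)
next
  case (Cons d s)
  have "closed_cell (d # s) = closed_cell s \<inter> {w \<in> topspace K. h d w \<in> {..1/2}}"
    by (auto simp: closed_cell_def)
  moreover have "closedin K {w \<in> topspace K. h d w \<in> {..1/2}}"
    using Cons.prems by (intro closedin_continuous_map_preimage[OF continuous_h]) auto
  ultimately show ?case
    using Cons by auto
qed

lemma cell_small_oscillation:
  assumes P: "closedin K P" "P \<subseteq> e ` topspace X" and g: "continuous_map K euclideanreal g"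
    and "\<epsilon> > 0" and "z \<in> P"
  obtains s where "s \<in> lists D" "z \<in> open_cell s" "\<forall>w\<in>P \<inter> closed_cell s. \<bar>g w - g z\<bar> < \<epsilon>"
proof -
  define Q where "Q = P \<inter> {w \<in> topspace K. \<epsilon> \<le> \<bar>g w - g z\<bar>}"
  define Dz where "Dz = {d \<in> D. h d z < 1/2}"
  define above where "above d = {w \<in> topspace K. h d w \<in> {1/2<..}}" for d
  have "compactin K Q"
    unfolding Q_def using P closedin_abs_diff_ge[OF g] compact_K closedin_compact_space by blast
  moreover have "openin K (above d)" if "d \<in> Dz" for d
    unfolding above_def using that
    by (intro openin_continuous_map_preimage[OF continuous_h]) (auto simp: Dz_def)
  moreover have "Q \<subseteq> \<Union>(above ` Dz)"
  proof
    fix q assume q: "q \<in> Q"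
    have "z \<in> e ` topspace X" "q \<in> e ` topspace X"
      using P q \<open>z \<in> P\<close> by (auto simp: Q_def)
    then obtain a b where "a \<in> topspace X" "z = e a" "b \<in> topspace X" "q = e b"
      by blast
    moreover have "a \<noteq> b"
      using q \<open>\<epsilon> > 0\<close> \<open>z = e a\<close> \<open>q = e b\<close> by (auto simp: Q_def)
    ultimately obtain d where "d \<in> D" "h d z < 1/2" "1/2 < h d q"
      using h_separates by blast
    then show "q \<in> \<Union>(above ` Dz)"
      using q by (auto simp: above_def Dz_def Q_def)
  qed
  ultimately obtain C where C: "finite C" "C \<subseteq> Dz" "Q \<subseteq> \<Union>(above ` C)"
    unfolding compactin_def by (metis (no_types, lifting) finite_subset_image imageE)
  obtain s where s: "set s = C"
    using finite_list[OF \<open>finite C\<close>] by blast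
  show thesis
  proof
    show "s \<in> lists D" "z \<in> open_cell s"
      using s C P \<open>z \<in> P\<close> closedin_subset by (fastforce simp: Dz_def open_cell_def)+
    show "\<forall>w\<in>P \<inter> closed_cell s. \<bar>g w - g z\<bar> < \<epsilon>"
      using s C by (force simp: Q_def closed_cell_def above_def)
  qed
qed

lemma finite_cell_cover:
  assumes P: "closedin K P" "P \<subseteq> e ` topspace X" and g: "continuous_map K euclideanreal g"
    and "\<epsilon> > 0"
  obtains l where "l \<in> lists (lists D \<times> (UNIV :: real set))"
    "P \<subseteq> (\<Union>(s, r)\<in>set l. open_cell s)" "\<forall>(s, r)\<in>set l. \<forall>w\<in>P \<inter> closed_cell s. \<bar>g w - r\<bar> < \<epsilon>"
proof -
  have "\<forall>z\<in>P. \<exists>s. s \<in> lists D \<and> z \<in> open_cell s \<and> (\<forall>w\<in>P \<inter> closed_cell s. \<bar>g w - g z\<bar> < \<epsilon>)"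
    using cell_small_oscillation[OF P g \<open>\<epsilon> > 0\<close>] by (metis (no_types, lifting))
  then obtain cell where cell: "\<And>z. z \<in> P \<Longrightarrow> cell z \<in> lists D \<and> z \<in> open_cell (cell z) \<and>
                              (\<forall>w\<in>P \<inter> closed_cell (cell z). \<bar>g w - g z\<bar> < \<epsilon>)"
    by (metis bchoice)
  have "compactin K P"
    using P compact_K closedin_compact_space by blast
  moreover have "\<forall>U\<in>(\<lambda>z. open_cell (cell z)) ` P. openin K U"
    using cell openin_open_cell by blast
  moreover have "P \<subseteq> \<Union>((\<lambda>z. open_cell (cell z)) ` P)"
    using cell by blast
  ultimately obtain \<U> where "finite \<U>" "\<U> \<subseteq> (\<lambda>z. open_cell (cell z)) ` P" "P \<subseteq> \<Union>\<U>"
    unfolding compactin_def by meson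
  then obtain Z where Z: "Z \<subseteq> P" "finite Z" "P \<subseteq> (\<Union>z\<in>Z. open_cell (cell z))"
    by (metis finite_subset_image)
  obtain zs where zs: "set zs = Z"
    using finite_list[OF \<open>finite Z\<close>] by blast
  show thesis
  proof (rule that[of "map (\<lambda>z. (cell z, g z)) zs"])
    show "map (\<lambda>z. (cell z, g z)) zs \<in> lists (lists D \<times> UNIV)"
      using Z(1) zs cell by (fastforce simp: in_lists_conv_set)
    show "P \<subseteq> (\<Union>(s, r)\<in>set (map (\<lambda>z. (cell z, g z)) zs). open_cell s)"
      using Z(3) zs by auto
    show "\<forall>(s, r)\<in>set (map (\<lambda>z. (cell z, g z)) zs). \<forall>w\<in>P \<inter> closed_cell s. \<bar>g w - r\<bar> < \<epsilon>"
      using Z(1) zs cell by auto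
  qed
qed

definition approximates :: "real \<Rightarrow> ('k \<Rightarrow> real) \<Rightarrow> 'k set list \<Rightarrow> ('d list \<times> real) list \<Rightarrow> bool"
  where "approximates \<epsilon> g T l \<longleftrightarrow>
    (\<forall>w\<in>topspace K \<inter> \<Inter>(set T). (\<exists>(s, r)\<in>set l. w \<in> closed_cell s) \<and>
                                 (\<forall>(s, r)\<in>set l. w \<in> closed_cell s \<longrightarrow> \<bar>g w - r\<bar> < \<epsilon>))"

definition failure_set :: "real \<Rightarrow> ('k \<Rightarrow> real) \<Rightarrow> ('d list \<times> real) list \<Rightarrow> 'k set" where
  "failure_set \<epsilon> g l = (topspace K - (\<Union>(s, r)\<in>set l. open_cell s)) \<union>
                         (\<Union>(s, r)\<in>set l. closed_cell s \<inter> {w \<in> topspace K. \<epsilon> \<le> \<bar>g w - r\<bar>})"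

lemma notin_failure_set_iff:
  assumes "w \<in> topspace K"
  shows "w \<notin> failure_set \<epsilon> g l \<longleftrightarrow> w \<in> (\<Union>(s, r)\<in>set l. open_cell s) \<and>
                                      (\<forall>(s, r)\<in>set l. w \<in> closed_cell s \<longrightarrow> \<bar>g w - r\<bar> < \<epsilon>)"
  using assms unfolding failure_set_def by auto

lemma closedin_failure_set:
  assumes "l \<in> lists (lists D \<times> UNIV)" and g: "continuous_map K euclideanreal g"
  shows "closedin K (failure_set \<epsilon> g l)"
proof -
  have "openin K (\<Union>(s, r)\<in>set l. open_cell s)"
    using assms(1) openin_open_cell by (intro openin_Union) (auto simp: in_lists_conv_set)
  moreover have "closedin K (closed_cell s \<inter> {w \<in> topspace K. \<epsilon> \<le> \<bar>g w - r\<bar>})"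
    if "(s, r) \<in> set l" for s r
    using that assms(1) closedin_closed_cell closedin_abs_diff_ge[OF g]
    by (intro closedin_Int) (auto simp: in_lists_conv_set)
  ultimately show ?thesis
    unfolding failure_set_def by (intro closedin_Un closedin_diff closedin_Union) auto
qed

lemma approximates_if_disjoint_failure_set:
  assumes "topspace K \<inter> \<Inter>(set T) \<inter> failure_set \<epsilon> g l = {}"
  shows "approximates \<epsilon> g T l"
  unfolding approximates_def
proof
  fix w assume w: "w \<in> topspace K \<inter> \<Inter>(set T)"
  then have "w \<in> (\<Union>(s, r)\<in>set l. open_cell s)"
    and "\<forall>(s, r)\<in>set l. w \<in> closed_cell s \<longrightarrow> \<bar>g w - r\<bar> < \<epsilon>"
    using assms notin_failure_set_iff[of w] by blast+
  then show "(\<exists>(s, r)\<in>set l. w \<in> closed_cell s) \<and>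
             (\<forall>(s, r)\<in>set l. w \<in> closed_cell s \<longrightarrow> \<bar>g w - r\<bar> < \<epsilon>)"
    using open_cell_subset_closed_cell by blast
qed

lemma Inter_\<F>_subset_image:
  assumes "x \<in> topspace X"
  shows "topspace K \<inter> \<Inter>{F \<in> \<F>. e x \<in> F} \<subseteq> e ` topspace X"
  using \<F>_separates[OF assms] by blast

lemma approximation_exists:
  assumes x: "x \<in> topspace X" and g: "continuous_map K euclideanreal g" and "\<epsilon> > 0"
  obtains T l where "T \<in> lists \<F>" "e x \<in> \<Inter>(set T)"
    "l \<in> lists (lists D \<times> (UNIV :: real set))" "approximates \<epsilon> g T l"
proof -
  define S where "S = {F \<in> \<F>. e x \<in> F}"
  define P where "P = topspace K \<inter> \<Inter>S"
  have "closedin K (\<Inter>(insert (topspace K) S))"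
    by (rule closedin_Inter) (auto simp: S_def closedin_\<F>)
  then have "closedin K P"
    by (simp add: P_def)
  moreover have "P \<subseteq> e ` topspace X"
    unfolding P_def S_def by (rule Inter_\<F>_subset_image[OF x])
  ultimately obtain l where l: "l \<in> lists (lists D \<times> (UNIV :: real set))"
    "P \<subseteq> (\<Union>(s, r)\<in>set l. open_cell s)" "\<forall>(s, r)\<in>set l. \<forall>w\<in>P \<inter> closed_cell s. \<bar>g w - r\<bar> < \<epsilon>"
    using finite_cell_cover g \<open>\<epsilon> > 0\<close> by blast
  (* The failure set is compact and disjoint from P = \<Inter>S,
     so finitely many members of S already exclude it. *)
  have "compactin K (failure_set \<epsilon> g l)"
    using closedin_failure_set[OF l(1) g] compact_K closedin_compact_space by blast
  moreover have "failure_set \<epsilon> g l \<inter> \<Inter>S = {}"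
  proof -
    have "w \<notin> failure_set \<epsilon> g l" if "w \<in> P" for w
      using l(2,3) that notin_failure_set_iff[of w] unfolding P_def by blast
    then show ?thesis
      using closedin_subset[OF closedin_failure_set[OF l(1) g]] unfolding P_def by blast
  qed
  moreover have "\<forall>C\<in>S. closedin K C"
    by (simp add: S_def closedin_\<F>)
  ultimately obtain T' where "finite T'" "T' \<subseteq> S" "failure_set \<epsilon> g l \<inter> \<Inter>T' = {}"
    unfolding compactin_fip by blast
  moreover obtain T where "set T = T'"
    using finite_list[OF \<open>finite T'\<close>] by blast
  ultimately show thesis
    using l(1) approximates_if_disjoint_failure_set[of T \<epsilon> g l]
    by (intro that[of T l]) (auto simp: S_def)
qed

lemma approximates_unique:
  assumes "approximates \<epsilon> g1 T l" "approximates \<epsilon> g2 T l" "w \<in> topspace K \<inter> \<Inter>(set T)"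
  shows "\<bar>g1 w - g2 w\<bar> < 2 * \<epsilon>"
proof -
  obtain s r where "(s, r) \<in> set l" "w \<in> closed_cell s"
    using assms(1,3) unfolding approximates_def by blast
  then have "\<bar>g1 w - r\<bar> < \<epsilon>" "\<bar>g2 w - r\<bar> < \<epsilon>"
    using assms unfolding approximates_def by fastforce+
  then show ?thesis
    by linarith
qed

(* Index (n, i) stands for precision 1/(n+1) and the i-th finite list of members of \<F>. *)
definition code :: "('k \<Rightarrow> real) \<Rightarrow> nat \<times> nat \<Rightarrow> ('d list \<times> real) list option" where
  "code g = (\<lambda>(n, i). let \<epsilon> = 1 / Suc n; T = from_nat_into (lists \<F>) i in
     if \<exists>l\<in>lists (lists D \<times> UNIV). approximates \<epsilon> g T l
     then Some (SOME l. l \<in> lists (lists D \<times> UNIV) \<and> approximates \<epsilon> g T l) else None)"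

lemma code_SomeD:
  assumes "code g (n, i) = Some l"
  shows "l \<in> lists (lists D \<times> UNIV)" "approximates (1 / Suc n) g (from_nat_into (lists \<F>) i) l"
proof -
  let ?P = "\<lambda>l. l \<in> lists (lists D \<times> UNIV) \<and> approximates (1 / Suc n) g (from_nat_into (lists \<F>) i) l"
  have "\<exists>l. ?P l" and "l = (SOME l. ?P l)"
    using assms unfolding code_def Let_def by (auto split: if_splits)
  then show "l \<in> lists (lists D \<times> UNIV)" "approximates (1 / Suc n) g (from_nat_into (lists \<F>) i) l"
    using someI_ex[of ?P] by auto
qed

lemma code_range: "code g k \<in> insert None (Some ` lists (lists D \<times> UNIV))"
proof (cases k)
  case (Pair n i)
  then show ?thesis
    using code_SomeD(1)[of g n i] by (cases "code g k") auto
qed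

lemma code_eq_imp_eq_on_image:
  assumes g1: "continuous_map K euclideanreal g1" and "code g1 = code g2" and x: "x \<in> topspace X"
  shows "g1 (e x) = g2 (e x)"
proof (rule ccontr)
  assume "g1 (e x) \<noteq> g2 (e x)"
  then have "0 < \<bar>g1 (e x) - g2 (e x)\<bar> / 2"
    by simp
  then obtain n where n: "inverse (real (Suc n)) < \<bar>g1 (e x) - g2 (e x)\<bar> / 2"
    using reals_Archimedean by blast
  obtain T l where T: "T \<in> lists \<F>" "e x \<in> \<Inter>(set T)"
    and l: "l \<in> lists (lists D \<times> UNIV)" "approximates (1 / Suc n) g1 T l"
    using approximation_exists[OF x g1, of "1 / Suc n"] by auto
  obtain i where i: "from_nat_into (lists \<F>) i = T"
    using from_nat_into_surj[OF _ T(1)] countable_\<F> by blast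
  with l have "\<exists>l\<in>lists (lists D \<times> UNIV). approximates (1 / Suc n) g1 (from_nat_into (lists \<F>) i) l"
    by blast
  then obtain l' where l': "code g1 (n, i) = Some l'"
    unfolding code_def Let_def by simp
  moreover from l' have "code g2 (n, i) = Some l'"
    using \<open>code g1 = code g2\<close> by simp
  ultimately have "approximates (1 / Suc n) g1 T l'" "approximates (1 / Suc n) g2 T l'"
    using code_SomeD(2) i by fastforce+
  moreover have "e x \<in> topspace K \<inter> \<Inter>(set T)"
    using x T(2) image_e by blast
  ultimately have "\<bar>g1 (e x) - g2 (e x)\<bar> < 2 * (1 / Suc n)"
    by (rule approximates_unique)
  moreover have "2 * (1 / Suc n) < \<bar>g1 (e x) - g2 (e x)\<bar>"
    using n by (simp add: inverse_eq_divide)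
  ultimately show False
    by linarith
qed

lemma traces_lepoll_nat_sets:
  assumes "D \<lesssim> (UNIV :: nat set set)"
  shows "(\<lambda>g. restrict (g \<circ> e) (topspace X)) ` {g. continuous_map K euclideanreal g}
           \<lesssim> (UNIV :: nat set set)"
proof -
  let ?C = "{g. continuous_map K euclideanreal g}"
  let ?codes = "{c :: nat \<times> nat \<Rightarrow> _. \<forall>k. c k \<in> insert None (Some ` lists (lists D \<times> (UNIV :: real set)))}"
  define decode where "decode c = restrict ((SOME g. g \<in> ?C \<and> code g = c) \<circ> e) (topspace X)" for c
  have "restrict (g \<circ> e) (topspace X) = decode (code g)" if "g \<in> ?C" for g
  proof -
    define g' where "g' = (SOME g'. g' \<in> ?C \<and> code g' = code g)"
    have "code g = code g'"
      using someI[of "\<lambda>g'. g' \<in> ?C \<and> code g' = code g"] that unfolding g'_def by auto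
    then have "g (e x) = g' (e x)" if "x \<in> topspace X" for x
      using code_eq_imp_eq_on_image \<open>g \<in> ?C\<close> that by blast
    then show ?thesis
      unfolding decode_def g'_def[symmetric] by (auto intro: restrict_ext)
  qed
  then have "(\<lambda>g. restrict (g \<circ> e) (topspace X)) ` ?C \<lesssim> code ` ?C"
    by (intro subset_image_lepoll[where f = decode]) auto
  also have "\<dots> \<lesssim> ?codes"
    by (intro subset_imp_lepoll image_subsetI CollectI allI code_range)
  also have "\<dots> \<lesssim> (UNIV :: nat set set)"
    using eqpoll_imp_lepoll[OF eqpoll_sym[OF nat_sets_eqpoll_reals]] assms
    by (intro countable_power_lepoll_nat_sets option_lepoll_nat_sets lists_lepoll_nat_sets
        Times_lepoll_nat_sets)
  finally show ?thesis .
qed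

end

lemma continuous_map_Cfun: "r \<in> Cfun X \<Longrightarrow> continuous_map X euclideanreal r"
  unfolding Cfun_def by (auto intro: continuous_map_eq)

lemma Cfun_subset_traces:
  assumes "stone_cech X K e"
  shows "Cfun X \<subseteq> (\<lambda>t. restrict (\<lambda>x. tan (pi * (t x - 1/2))) (topspace X)) `
                    (\<lambda>g. restrict (g \<circ> e) (topspace X)) ` {g. continuous_map K euclideanreal g}"
proof
  fix r assume "r \<in> Cfun X"
  then obtain f where f: "continuous_map X euclideanreal f" and r: "r = restrict f (topspace X)"
    unfolding Cfun_def by blast
  (* Squash f into [0,1] by an arctan so that it extends over the compactification. *)
  have "continuous_on UNIV (\<lambda>t. 1/2 + arctan t / pi)"
    by (intro continuous_intros) auto
  then have "continuous_map X euclideanreal (\<lambda>x. 1/2 + arctan (f x) / pi)"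
    using continuous_map_compose[OF f, of euclideanreal] by (simp add: o_def)
  moreover have "1/2 + arctan t / pi \<in> {0..1}" for t
    using arctan_bounded[of t] by (auto simp: field_simps)
  ultimately have "continuous_map X (top_of_set {0..1}) (\<lambda>x. 1/2 + arctan (f x) / pi)"
    by (simp add: continuous_map_in_subtopology image_subset_iff)
  then obtain g where g: "continuous_map K euclideanreal g"
    and ge: "\<And>x. x \<in> topspace X \<Longrightarrow> g (e x) = 1/2 + arctan (f x) / pi"
    using stone_cech_extension[OF assms] by blast
  have "r = restrict (\<lambda>x. tan (pi * (restrict (g \<circ> e) (topspace X) x - 1/2))) (topspace X)"
    unfolding r by (intro restrict_ext) (simp add: ge tan_arctan)
  with g show "r \<in> (\<lambda>t. restrict (\<lambda>x. tan (pi * (t x - 1/2))) (topspace X)) `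
                    (\<lambda>g. restrict (g \<circ> e) (topspace X)) ` {g. continuous_map K euclideanreal g}"
    by blast
qed

lemma weight_le_continuum_if_Cfun_lepoll:
  assumes "completely_regular_space X" and "Cfun X \<lesssim> (UNIV :: real set)"
  shows "weight_le_continuum X"
proof -
  define \<B> where "\<B> = (\<lambda>r. {x \<in> topspace X. r x \<in> {..<1/2}}) ` Cfun X"
  have "openin X {x \<in> topspace X. r x \<in> {..<1/2}}" if "r \<in> Cfun X" for r
    by (rule openin_continuous_map_preimage[OF continuous_map_Cfun[OF that]]) simp
  then have "openin X B" if "B \<in> \<B>" for B
    using that unfolding \<B>_def by blast
  moreover have "\<exists>B\<in>\<B>. x \<in> B \<and> B \<subseteq> W" if "openin X W" "x \<in> W" for W x
  proof -
    have "closedin X (topspace X - W)" "x \<in> topspace X - (topspace X - W)"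
      using that openin_subset by auto
    then obtain u where u: "continuous_map X (top_of_set {0..1::real}) u" "u x = 0"
      "u ` (topspace X - W) \<subseteq> {1}"
      using assms(1) unfolding completely_regular_space_def by blast
    then have "restrict u (topspace X) \<in> Cfun X"
      unfolding Cfun_def using continuous_map_in_subtopology by blast
    moreover have "x \<in> {y \<in> topspace X. restrict u (topspace X) y \<in> {..<1/2}}"
      using u(2) that openin_subset by fastforce
    moreover have "{y \<in> topspace X. restrict u (topspace X) y \<in> {..<1/2}} \<subseteq> W"
      using u(3) by force
    ultimately show ?thesis
      unfolding \<B>_def by blast
  qed
  ultimately have "topology_base X \<B>"
    unfolding topology_base_def openin_topology_base_unique by blast
  moreover have "\<B> \<lesssim> (UNIV :: real set)"
    unfolding \<B>_def using image_lepoll assms(2) lepoll_trans by blast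
  ultimately show ?thesis
    unfolding weight_le_continuum_def by blast
qed

lemma lindelof_sigma_setting_exists:
  fixes X :: "'a topology"
  assumes "tychonoff_space X" and "lindelof_sigma X" and "network X N"
  obtains K :: "(('a \<Rightarrow> real) \<Rightarrow> real) topology" and e \<F> D h
  where "stone_cech X K e" "D \<subseteq> N \<times> N" "lindelof_sigma_setting X K e \<F> D h"
proof -
  have cr: "completely_regular_space X" and t1: "t1_space X"
    using assms(1) Hausdorff_imp_t1_space unfolding tychonoff_space_def by blast+
  obtain K :: "(('a \<Rightarrow> real) \<Rightarrow> real) topology" and e \<F> where sc: "stone_cech X K e"
    and \<F>: "countable \<F>" "\<forall>F\<in>\<F>. closedin K F"
      "\<forall>x\<in>topspace X. \<forall>y\<in>topspace K - e ` topspace X. \<exists>F\<in>\<F>. e x \<in> F \<and> y \<notin> F"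
    using assms(2) unfolding lindelof_sigma_def by blast
  obtain D h where D: "D \<subseteq> N \<times> N" and h: "\<And>d. d \<in> D \<Longrightarrow> continuous_map K euclideanreal (h d)"
    "\<And>x y. x \<in> topspace X \<Longrightarrow> y \<in> topspace X \<Longrightarrow> x \<noteq> y \<Longrightarrow> \<exists>d\<in>D. h d (e x) < 1/2 \<and> 1/2 < h d (e y)"
    using stone_cech_separating_family[OF cr t1 sc assms(3)] by metis
  have "continuous_map X K e"
    using sc unfolding stone_cech_def embedding_map_def
    by (metis continuous_map_in_subtopology homeomorphic_imp_continuous_map)
  then have "lindelof_sigma_setting X K e \<F> D h"
    using sc \<F> h unfolding stone_cech_def
    by unfold_locales (auto dest: continuous_map_image_subset_topspace)
  with sc D show thesis
    by (rule that)
qed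

theorem corollary1:
  fixes X :: "'a topology"
  assumes "tychonoff_space X"
    and "lindelof_sigma X"
    and "nw_le_continuum X"
  shows "Cfun X \<lesssim> (UNIV :: real set) \<and> weight_le_continuum X"
proof -
  obtain N where N: "network X N" "N \<lesssim> (UNIV :: real set)"
    using assms(3) unfolding nw_le_continuum_def by blast
  obtain K :: "(('a \<Rightarrow> real) \<Rightarrow> real) topology" and e \<F> D h where sc: "stone_cech X K e"
    and "D \<subseteq> N \<times> N" and "lindelof_sigma_setting X K e \<F> D h"
    by (rule lindelof_sigma_setting_exists[OF assms(1,2) N(1)])
  interpret lindelof_sigma_setting X K e \<F> D h
    by fact
  have reals: "(UNIV :: real set) \<lesssim> (UNIV :: nat set set)"
    using eqpoll_imp_lepoll[OF eqpoll_sym[OF nat_sets_eqpoll_reals]] .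
  have "N \<lesssim> (UNIV :: nat set set)"
    using N(2) reals by (rule lepoll_trans)
  then have "D \<lesssim> (UNIV :: nat set set)"
    using \<open>D \<subseteq> N \<times> N\<close> Times_lepoll_nat_sets subset_imp_lepoll lepoll_trans by blast
  have "Cfun X \<lesssim> (\<lambda>g. restrict (g \<circ> e) (topspace X)) ` {g. continuous_map K euclideanreal g}"
    using subset_imp_lepoll[OF Cfun_subset_traces[OF sc]] image_lepoll by (rule lepoll_trans)
  also have "\<dots> \<lesssim> (UNIV :: nat set set)"
    by (rule traces_lepoll_nat_sets) fact
  finally have "Cfun X \<lesssim> (UNIV :: nat set set)" .
  then have "Cfun X \<lesssim> (UNIV :: real set)"
    using nat_sets_eqpoll_reals lepoll_trans2 by blast
  moreover have "completely_regular_space X"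
    using assms(1) unfolding tychonoff_space_def by blast
  ultimately show ?thesis
    using weight_le_continuum_if_Cfun_lepoll by blast
qed

end
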